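(* Let $(S,\sqcup,\cap)$ be an ado-semilattice and let $I$ be a relatively maximal $\lesssim$-ideal of $S$. Define $E_I=\{(a,b)\in S\times S: a\notin I,\ b\notin I,\ a\curlyvee b\notin I\}$ and $\epsilon_I=E_I\cup(I\times I)$, where $a\curlyvee b=(a\sqcup b)\cap(b\sqcup a)$. Then $\epsilon_I$ is a congruence of the ado-semilattice $(S,\sqcup,\cap)$ and $S/\epsilon_I$ is a flat ado-semilattice. Moreover, $S$ is a subdirect product of the algebras $S/\epsilon_I$ as $I$ ranges over all relatively maximal $\lesssim$-ideals of $S$.
   Context: An o-semilattice is an algebra $(L,\cap,\sqcup)$ such that $(L,\cap)$ is a semilattice and, with $x\leq y$ iff $x=x\cap y$, for all $x,y,z$: (i) $x\leq x\sqcup y$; (ii) $(x\cap y)\sqcup(y\cap z)\leq y$; (iii) $x\sqcup y\leq x\sqcup(y\cap(x\sqcup y))$; (iv) $x\cap z\leq(x\cap y)\sqcup z$. It is distributive if $(a\cap d)\sqcup((b\cap d)\cap(c\cap d))=((a\cap d)\sqcup(b\cap d))\cap((a\cap d)\sqcup(c\cap d))$ for all $a,b,c,d$. An ado-semilattice is a distributive o-semilattice in which $\sqcup$ is associative. Write $x\lesssim y$ iff $y\sqcup x=y$. A $\lesssim$-ideal is a non-empty subset $I$ that is a down-set under $\lesssim$ with $i\sqcup j\in I$ for all $i,j\in I$; it is relatively maximal if for some $d\in S$, $d\notin I$ and no $\lesssim$-ideal properly containing $I$ omits $d$. A flat ado-semilattice is an algebra $(T,\sqcup,\cap)$ with an element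 $0$ such that $a\cap a=a$, $0\cap a=a\cap 0=0$, $a\cap b=0$ for distinct $a,b$, $0\sqcup a=a$, and $a\sqcup b=a$ whenever $a\neq0$. *)

theory Defs
  imports Main "HOL-Library.FuncSet"
begin

text \<open>The algebra S is the whole type 'a, with join j (the operation \<sqcup>)
 and meet m (the operation \<inter>).\<close>

definition ole :: "('a \<Rightarrow> 'a \<Rightarrow> 'a) \<Rightarrow> 'a \<Rightarrow> 'a \<Rightarrow> bool" where
  "ole m x y \<longleftrightarrow> x = m x y"

definition o_semilattice :: "('a \<Rightarrow> 'a \<Rightarrow> 'a) \<Rightarrow> ('a \<Rightarrow> 'a \<Rightarrow> 'a) \<Rightarrow> bool" where
  "o_semilattice j m \<longleftrightarrow>
     (\<forall>x y z. m (m x y) z = m x (m y z)) \<and> (\<forall>x y. m x y = m y x) \<and> (\<forall>x. m x x = x) \<and>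
     (\<forall>x y. ole m x (j x y)) \<and>
     (\<forall>x y z. ole m (j (m x y) (m y z)) y) \<and>
     (\<forall>x y. ole m (j x y) (j x (m y (j x y)))) \<and>
     (\<forall>x y z. ole m (m x z) (j (m x y) z))"

definition distributive_os :: "('a \<Rightarrow> 'a \<Rightarrow> 'a) \<Rightarrow> ('a \<Rightarrow> 'a \<Rightarrow> 'a) \<Rightarrow> bool" where
  "distributive_os j m \<longleftrightarrow> o_semilattice j m \<and>
     (\<forall>a b c d. j (m a d) (m (m b d) (m c d)) = m (j (m a d) (m b d)) (j (m a d) (m c d)))"

definition ado_semilattice :: "('a \<Rightarrow> 'a \<Rightarrow> 'a) \<Rightarrow> ('a \<Rightarrow> 'a \<Rightarrow> 'a) \<Rightarrow> bool" where
  "ado_semilattice j m \<longleftrightarrow> distributive_os j m \<and> (\<forall>x y z. j (j x y) z = j x (j y z))"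

definition qle :: "('a \<Rightarrow> 'a \<Rightarrow> 'a) \<Rightarrow> 'a \<Rightarrow> 'a \<Rightarrow> bool" where
  "qle j x y \<longleftrightarrow> j y x = y"

definition qideal :: "('a \<Rightarrow> 'a \<Rightarrow> 'a) \<Rightarrow> 'a set \<Rightarrow> bool" where
  "qideal j I \<longleftrightarrow> I \<noteq> {} \<and> (\<forall>x y. y \<in> I \<and> qle j x y \<longrightarrow> x \<in> I) \<and>
     (\<forall>x\<in>I. \<forall>y\<in>I. j x y \<in> I)"

definition rel_max_qideal :: "('a \<Rightarrow> 'a \<Rightarrow> 'a) \<Rightarrow> 'a set \<Rightarrow> bool" where
  "rel_max_qideal j I \<longleftrightarrow> qideal j I \<and>
     (\<exists>d. d \<notin> I \<and> (\<forall>J. qideal j J \<and> I \<subset> J \<longrightarrow> d \<in> J))"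

definition curlyvee :: "('a \<Rightarrow> 'a \<Rightarrow> 'a) \<Rightarrow> ('a \<Rightarrow> 'a \<Rightarrow> 'a) \<Rightarrow> 'a \<Rightarrow> 'a \<Rightarrow> 'a" where
  "curlyvee j m a b = m (j a b) (j b a)"

definition E_rel :: "('a \<Rightarrow> 'a \<Rightarrow> 'a) \<Rightarrow> ('a \<Rightarrow> 'a \<Rightarrow> 'a) \<Rightarrow> 'a set \<Rightarrow> ('a \<times> 'a) set" where
  "E_rel j m I = {(a, b). a \<notin> I \<and> b \<notin> I \<and> curlyvee j m a b \<notin> I}"

definition eps_rel :: "('a \<Rightarrow> 'a \<Rightarrow> 'a) \<Rightarrow> ('a \<Rightarrow> 'a \<Rightarrow> 'a) \<Rightarrow> 'a set \<Rightarrow> ('a \<times> 'a) set" where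
  "eps_rel j m I = E_rel j m I \<union> (I \<times> I)"

definition congruence2 :: "('a \<Rightarrow> 'a \<Rightarrow> 'a) \<Rightarrow> ('a \<Rightarrow> 'a \<Rightarrow> 'a) \<Rightarrow> ('a \<times> 'a) set \<Rightarrow> bool" where
  "congruence2 j m r \<longleftrightarrow> equiv UNIV r \<and>
     (\<forall>a a' b b'. (a, a') \<in> r \<and> (b, b') \<in> r \<longrightarrow> (j a b, j a' b') \<in> r \<and> (m a b, m a' b') \<in> r)"

definition quot_op :: "('a \<times> 'a) set \<Rightarrow> ('a \<Rightarrow> 'a \<Rightarrow> 'a) \<Rightarrow> 'a set \<Rightarrow> 'a set \<Rightarrow> 'a set" where
  "quot_op r f X Y = r `` {f (SOME x. x \<in> X) (SOME y. y \<in> Y)}"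

definition flat_ado :: "'b set \<Rightarrow> ('b \<Rightarrow> 'b \<Rightarrow> 'b) \<Rightarrow> ('b \<Rightarrow> 'b \<Rightarrow> 'b) \<Rightarrow> bool" where
  "flat_ado T j m \<longleftrightarrow>
     (\<forall>a\<in>T. \<forall>b\<in>T. j a b \<in> T \<and> m a b \<in> T) \<and>
     (\<exists>z\<in>T. \<forall>a\<in>T. m a a = a \<and> m z a = z \<and> m a z = z \<and> j z a = a \<and>
        (\<forall>b\<in>T. (a \<noteq> b \<longrightarrow> m a b = z) \<and> (a \<noteq> z \<longrightarrow> j a b = a)))"

text \<open>S is a subdirect product of the quotients S/r_i (i \<in> R): the canonical
 homomorphism into the product (a homomorphism since each r_i is a congruence,
 with surjective projections since the factors are quotients) is injective.\<close>
definition subdirect_of_quotients :: "'i set \<Rightarrow> ('i \<Rightarrow> ('a \<times> 'a) set) \<Rightarrow> bool" where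
  "subdirect_of_quotients R r \<longleftrightarrow> inj (\<lambda>a. restrict (\<lambda>i. r i `` {a}) R)"

end

theory Submission
  imports Defs
begin

text \<open>
  Fix a relatively maximal \<open>\<lesssim>\<close>-ideal \<open>I\<close> with witness \<open>d\<close>. An element \<open>x\<close> lies
  outside \<open>I\<close> iff \<open>d \<lesssim> i \<squnion> x\<close> for some \<open>i \<in> I\<close>. Since \<open>\<squnion>\<close> distributes over \<open>\<sqinter>\<close>
  from the left, and \<open>d \<lesssim> x\<close>, \<open>d \<lesssim> y\<close> imply \<open>d \<lesssim> x \<sqinter> y\<close> whenever \<open>x\<close> and \<open>y\<close>
  have a common upper bound, the complement of \<open>I\<close> is closed under meets of bounded
  pairs. This makes \<open>E\<^sub>I\<close> transitive and compatible with both operations, so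
  \<open>\<epsilon>\<^sub>I\<close> is a congruence whose classes are \<open>I\<close>, the zero of the quotient, and the
  \<open>E\<^sub>I\<close>-classes, on which the operations act flatly.

  For the subdirect representation, Zorn's lemma shows that \<open>x \<lesssim> c\<close> as soon as every
  relatively maximal ideal containing \<open>c\<close> contains \<open>x\<close>. If \<open>a\<close> and \<open>b\<close> are identified
  by every \<open>\<epsilon>\<^sub>I\<close>, this yields \<open>a \<lesssim> b\<close>, \<open>b \<lesssim> a\<close>, \<open>a \<lesssim> a \<curlyvee> b\<close> and
  \<open>b \<lesssim> a \<curlyvee> b\<close>, which force \<open>a = b\<close>.
\<close>

lemma qidealI:
  assumes "I \<noteq> {}" and "\<And>x y. y \<in> I \<Longrightarrow> qle j x y \<Longrightarrow> x \<in> I"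
    and "\<And>x y. x \<in> I \<Longrightarrow> y \<in> I \<Longrightarrow> j x y \<in> I"
  shows "qideal j I"
  using assms unfolding qideal_def by blast

lemma qideal_nonempty: "qideal j I \<Longrightarrow> I \<noteq> {}"
  and qideal_down: "qideal j I \<Longrightarrow> y \<in> I \<Longrightarrow> qle j x y \<Longrightarrow> x \<in> I"
  and qideal_join: "qideal j I \<Longrightarrow> x \<in> I \<Longrightarrow> y \<in> I \<Longrightarrow> j x y \<in> I"
  unfolding qideal_def by blast+

lemma qideal_Union_chain:
  assumes "C \<noteq> {}" and "subset.chain {J. qideal j J} C"
  shows "qideal j (\<Union>C)"
proof (rule qidealI)
  have ideals: "\<And>J. J \<in> C \<Longrightarrow> qideal j J"
    using assms(2) unfolding subset_chain_def by auto
  have comparable: "\<And>X Y. X \<in> C \<Longrightarrow> Y \<in> C \<Longrightarrow> X \<subseteq> Y \<or> Y \<subseteq> X"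
    using assms(2) unfolding subset_chain_def by auto
  show "\<Union>C \<noteq> {}"
    using assms(1) qideal_nonempty[OF ideals] by blast
  show "x \<in> \<Union>C" if "y \<in> \<Union>C" and "qle j x y" for x y
    using that qideal_down[OF ideals] by (meson UnionE UnionI)
  show "j x y \<in> \<Union>C" if x: "x \<in> \<Union>C" and y: "y \<in> \<Union>C" for x y
  proof -
    obtain X Y where "x \<in> X" "X \<in> C" "y \<in> Y" "Y \<in> C"
      using x y by blast
    with comparable[of X Y] have "j x y \<in> X \<or> j x y \<in> Y"
      using qideal_join[OF ideals[of X]] qideal_join[OF ideals[of Y]] by auto
    with \<open>X \<in> C\<close> \<open>Y \<in> C\<close> show ?thesis
      by blast
  qed
qed

lemma qideal_extends_to_rel_max:
  assumes "qideal j I0" and "d \<notin> I0"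
  shows "\<exists>I. rel_max_qideal j I \<and> I0 \<subseteq> I \<and> d \<notin> I"
proof -
  let ?A = "{J. qideal j J \<and> I0 \<subseteq> J \<and> d \<notin> J}"
  have "\<exists>I\<in>?A. \<forall>J\<in>?A. I \<subseteq> J \<longrightarrow> J = I"
  proof (rule subset_Zorn_nonempty)
    show "?A \<noteq> {}"
      using assms by blast
    show "\<Union>C \<in> ?A" if C: "C \<noteq> {}" and chain: "subset.chain ?A C" for C
    proof -
      have sub: "C \<subseteq> ?A" and "subset.chain {J. qideal j J} C"
        using chain unfolding subset_chain_def by auto
      then have "qideal j (\<Union>C)"
        by (intro qideal_Union_chain[OF C])
      moreover have "I0 \<subseteq> \<Union>C" and "d \<notin> \<Union>C"
        using C sub by auto
      ultimately show ?thesis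
        by simp
    qed
  qed
  then obtain I where I: "qideal j I" "I0 \<subseteq> I" "d \<notin> I"
    and maximal: "\<And>J. qideal j J \<Longrightarrow> I0 \<subseteq> J \<Longrightarrow> d \<notin> J \<Longrightarrow> I \<subseteq> J \<Longrightarrow> J = I"
    by auto
  have "d \<in> J" if "qideal j J" and "I \<subset> J" for J
    using maximal[of J] that I(2) by auto
  with I have "rel_max_qideal j I"
    unfolding rel_max_qideal_def by auto
  with I show ?thesis
    by auto
qed

lemma quot_op_class:
  assumes "equiv UNIV r"
    and compatible: "\<And>a a' b b'. (a, a') \<in> r \<Longrightarrow> (b, b') \<in> r \<Longrightarrow> (f a b, f a' b') \<in> r"
  shows "quot_op r f (r``{a}) (r``{b}) = r``{f a b}"
proof -
  have "a \<in> r``{a}" "b \<in> r``{b}"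
    using equiv_class_self[OF assms(1)] by simp_all
  then have "(a, SOME x. x \<in> r``{a}) \<in> r" "(b, SOME y. y \<in> r``{b}) \<in> r"
    by (metis Image_singleton_iff someI)+
  then have "(f a b, f (SOME x. x \<in> r``{a}) (SOME y. y \<in> r``{b})) \<in> r"
    by (rule compatible)
  then show ?thesis
    unfolding quot_op_def using equiv_class_eq[OF assms(1)] by metis
qed

lemma flat_ado_quotient:
  assumes cong: "congruence2 j m r"
    and "\<And>a. (m a a, a) \<in> r"
    and "\<And>a. (m z a, z) \<in> r" and "\<And>a. (m a z, z) \<in> r" and "\<And>a. (j z a, a) \<in> r"
    and "\<And>a b. (a, b) \<notin> r \<Longrightarrow> (m a b, z) \<in> r"
    and "\<And>a b. (a, z) \<notin> r \<Longrightarrow> (j a b, a) \<in> r"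
  shows "flat_ado (UNIV // r) (quot_op r j) (quot_op r m)"
proof -
  have equiv: "equiv UNIV r"
    and "\<And>a a' b b'. (a, a') \<in> r \<Longrightarrow> (b, b') \<in> r \<Longrightarrow> (j a b, j a' b') \<in> r"
    and "\<And>a a' b b'. (a, a') \<in> r \<Longrightarrow> (b, b') \<in> r \<Longrightarrow> (m a b, m a' b') \<in> r"
    using cong unfolding congruence2_def by blast+
  then have j_class: "quot_op r j (r``{a}) (r``{b}) = r``{j a b}"
    and m_class: "quot_op r m (r``{a}) (r``{b}) = r``{m a b}" for a b
    by (simp_all add: quot_op_class)
  have class_eq: "r``{a} = r``{b} \<longleftrightarrow> (a, b) \<in> r" for a b
    by (rule eq_equiv_class_iff[OF equiv]) simp_all
  have all_classes: "\<forall>A\<in>UNIV // r. P A" if "\<And>a. P (r``{a})" for P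
    using that by (auto elim!: quotientE)
  show ?thesis
    unfolding flat_ado_def
    by (intro conjI all_classes bexI[of _ "r``{z}"])
      (simp_all add: j_class m_class class_eq quotientI assms(2-7))
qed

locale o_semilat =
  fixes j :: "'a \<Rightarrow> 'a \<Rightarrow> 'a" (infixl "\<squnion>" 65)
    and m :: "'a \<Rightarrow> 'a \<Rightarrow> 'a" (infixl "\<sqinter>" 70)
  assumes meet_semilattice: "semilattice m"
    and le_join: "ole m x (x \<squnion> y)"
    and join_meets_le: "ole m ((x \<sqinter> y) \<squnion> (y \<sqinter> z)) y"
    and join_le_join_meet: "ole m (x \<squnion> y) (x \<squnion> (y \<sqinter> (x \<squnion> y)))"
    and meet_le_join: "ole m (x \<sqinter> z) ((x \<sqinter> y) \<squnion> z)"
begin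

abbreviation meet_order (infix "\<preceq>" 50) where "x \<preceq> y \<equiv> ole m x y"
abbreviation join_preorder (infix "\<lesssim>" 50) where "x \<lesssim> y \<equiv> qle j x y"
abbreviation curly_vee (infixl "\<curlyvee>" 65) where "a \<curlyvee> b \<equiv> curlyvee j m a b"

sublocale M: semilattice_order m "(\<preceq>)" "\<lambda>x y. x \<preceq> y \<and> x \<noteq> y"
  using meet_semilattice
  by (simp add: semilattice_order_def semilattice_order_axioms_def ole_def)

lemma join_idem: "x \<squnion> x = x"
  using join_meets_le[of x x x] le_join[of x x] by (simp add: M.antisym)

lemma join_eq_right: "x \<preceq> y \<Longrightarrow> x \<squnion> y = y"
  using join_meets_le[of x y y] meet_le_join[of y y x] by (simp add: M.absorb1 M.absorb2 M.antisym)

lemma join_eq_left: "x \<preceq> y \<Longrightarrow> y \<squnion> x = y"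
  using join_meets_le[of y y x] le_join[of y x] by (simp add: M.absorb2 M.antisym)

lemma le_join_commuted: "u \<preceq> e \<Longrightarrow> v \<preceq> e \<Longrightarrow> u \<preceq> v \<squnion> u"
  using meet_le_join[of e u v] by (simp add: M.absorb2)

lemma qle_refl: "x \<lesssim> x"
  unfolding qle_def by (rule join_idem)

lemma qle_if_le: "x \<preceq> y \<Longrightarrow> x \<lesssim> y"
  unfolding qle_def by (rule join_eq_left)

lemma qle_join_left: "x \<lesssim> x \<squnion> y"
  by (rule qle_if_le) (rule le_join)

lemma eq_if_le_qle: "x \<preceq> y \<Longrightarrow> y \<lesssim> x \<Longrightarrow> x = y"
  unfolding qle_def using join_eq_right by metis

lemma curlyvee_commute: "a \<curlyvee> b = b \<curlyvee> a"
  unfolding curlyvee_def by (rule M.commute)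

lemma curlyvee_idem: "a \<curlyvee> a = a"
  unfolding curlyvee_def by (simp add: join_idem)

lemma meet_le_curlyvee: "a \<sqinter> b \<preceq> a \<curlyvee> b"
  unfolding curlyvee_def by (simp add: M.coboundedI1 M.coboundedI2 le_join)

lemma curlyvee_le_join: "a \<curlyvee> b \<preceq> a \<squnion> b"
  and curlyvee_le_join_commuted: "a \<curlyvee> b \<preceq> b \<squnion> a"
  unfolding curlyvee_def by simp_all

lemma curlyvee_meet_self: "(a \<sqinter> b) \<curlyvee> a = a"
  unfolding curlyvee_def by (simp add: join_eq_right join_eq_left)

end

locale ado_semilat = o_semilat +
  assumes distrib: "(a \<sqinter> d) \<squnion> ((b \<sqinter> d) \<sqinter> (c \<sqinter> d)) =
      ((a \<sqinter> d) \<squnion> (b \<sqinter> d)) \<sqinter> ((a \<sqinter> d) \<squnion> (c \<sqinter> d))"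
    and join_assoc: "x \<squnion> y \<squnion> z = x \<squnion> (y \<squnion> z)"

lemma ado_semilatI: "ado_semilattice j m \<Longrightarrow> ado_semilat j m"
  unfolding ado_semilattice_def distributive_os_def o_semilattice_def
  by unfold_locales (elim conjE; metis)+

context ado_semilat
begin

lemma join_join_self: "x \<squnion> (x \<squnion> y) = x \<squnion> y"
  by (simp add: join_assoc[symmetric] join_idem)

lemma join_mono_right:
  assumes "x \<preceq> z" shows "w \<squnion> x \<preceq> w \<squnion> z"
proof -
  have "w \<squnion> z = w \<squnion> x \<squnion> z"
    using join_eq_right[OF assms] by (simp add: join_assoc)
  then show ?thesis
    using le_join[of "w \<squnion> x" z] by simp
qed

lemma join_meet_join: "w \<squnion> (y \<sqinter> (w \<squnion> y)) = w \<squnion> y"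
  by (rule M.antisym) (simp_all add: join_mono_right join_le_join_meet)

lemma distrib_bounded:
  "u \<preceq> e \<Longrightarrow> v \<preceq> e \<Longrightarrow> w \<preceq> e \<Longrightarrow> u \<squnion> (v \<sqinter> w) = (u \<squnion> v) \<sqinter> (u \<squnion> w)"
  using distrib[of u e v w] by (simp add: M.absorb1)

lemma join_meet_eq_join:
  assumes v: "v \<preceq> w \<squnion> x" shows "w \<squnion> (v \<sqinter> x) = w \<squnion> v"
proof -
  have "w \<squnion> (v \<sqinter> x) = w \<squnion> (v \<sqinter> (x \<sqinter> (w \<squnion> x)))"
    using M.absorb1[OF M.coboundedI1[OF v]] by (simp add: M.assoc)
  also have "\<dots> = (w \<squnion> v) \<sqinter> (w \<squnion> (x \<sqinter> (w \<squnion> x)))"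
    by (rule distrib_bounded[where e = "w \<squnion> x"]) (simp_all add: v le_join)
  also have "\<dots> = (w \<squnion> v) \<sqinter> (w \<squnion> x)"
    by (simp only: join_meet_join)
  also have "\<dots> = w \<squnion> v"
    using join_mono_right[OF v, of w] by (simp add: join_join_self M.absorb1)
  finally show ?thesis .
qed

text \<open>Left distributivity of \<open>\<squnion>\<close> over \<open>\<sqinter>\<close> holds without any boundedness hypothesis.\<close>

lemma join_meet_distrib: "w \<squnion> (x \<sqinter> y) = (w \<squnion> x) \<sqinter> (w \<squnion> y)"
proof (rule M.antisym)
  show "w \<squnion> (x \<sqinter> y) \<preceq> (w \<squnion> x) \<sqinter> (w \<squnion> y)"
    by (simp add: join_mono_right)
  define t where "t = (w \<squnion> x) \<sqinter> (w \<squnion> y)"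
  have "w \<squnion> t = t"
    by (rule join_eq_right) (simp add: t_def le_join)
  then have "w \<squnion> (t \<sqinter> x) = t"
    using join_meet_eq_join[of t w x] by (simp add: t_def)
  then have "w \<squnion> (t \<sqinter> x \<sqinter> y) = t"
    using join_meet_eq_join[of "t \<sqinter> x" w y] by (simp add: t_def M.coboundedI1)
  moreover have "w \<squnion> (t \<sqinter> x \<sqinter> y) \<preceq> w \<squnion> (x \<sqinter> y)"
    by (rule join_mono_right) (simp add: M.coboundedI1)
  ultimately show "t \<preceq> w \<squnion> (x \<sqinter> y)"
    by simp
qed

lemma join_le_swap: "u \<preceq> v \<squnion> u \<Longrightarrow> u \<squnion> v \<preceq> v \<squnion> u"
  using join_mono_right[OF le_join[of v u], of u] by (simp add: join_eq_right)

lemma join_commute_bounded: "u \<preceq> e \<Longrightarrow> v \<preceq> e \<Longrightarrow> u \<squnion> v = v \<squnion> u"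
  by (rule M.antisym) (simp_all add: join_le_swap le_join_commuted)

lemma le_if_qle_bounded: "a \<preceq> e \<Longrightarrow> b \<preceq> e \<Longrightarrow> a \<lesssim> b \<Longrightarrow> a \<preceq> b"
  unfolding qle_def using le_join[of a b] by (simp add: join_commute_bounded[of a e b])


lemma qle_trans: "x \<lesssim> y \<Longrightarrow> y \<lesssim> z \<Longrightarrow> x \<lesssim> z"
  unfolding qle_def by (metis join_assoc)

lemma qle_join_right: "y \<lesssim> x \<squnion> y"
  unfolding qle_def by (simp add: join_assoc join_idem)

lemma join_qle: "x \<lesssim> z \<Longrightarrow> y \<lesssim> z \<Longrightarrow> x \<squnion> y \<lesssim> z"
  unfolding qle_def by (metis join_assoc)

lemma join_qle_mono_left: "i \<lesssim> i' \<Longrightarrow> i \<squnion> x \<lesssim> i' \<squnion> x"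
  by (blast intro: join_qle qle_trans qle_join_left qle_join_right)

text \<open>
  As \<open>\<squnion>\<close> is monotone only in its right argument, \<open>z \<squnion> d = z\<close> cannot be pushed down to
  \<open>x \<sqinter> y \<squnion> d \<squnion> z = z\<close> directly; the element \<open>z \<sqinter> (d \<squnion> z)\<close> mediates.
\<close>

lemma bound_meet_join_join:
  assumes "x \<preceq> z" and "d \<lesssim> x"
  shows "(z \<sqinter> (d \<squnion> z)) \<squnion> x = z"
proof -
  have "(z \<sqinter> (d \<squnion> z)) \<squnion> x = x \<squnion> (z \<sqinter> (d \<squnion> z))"
    using assms(1) by (simp add: join_commute_bounded[of _ z])
  also have "\<dots> = x \<squnion> d \<squnion> (z \<sqinter> (d \<squnion> z))"
    using assms(2) by (simp add: qle_def)
  also have "\<dots> = x \<squnion> d \<squnion> z"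
    by (simp add: join_assoc join_meet_join)
  also have "\<dots> = z"
    using assms by (simp add: qle_def join_eq_right)
  finally show ?thesis .
qed

lemma meet_join_le_bound:
  assumes x: "x \<preceq> z" "d \<lesssim> x" and y: "y \<preceq> z" "d \<lesssim> y"
  shows "x \<sqinter> y \<squnion> d \<preceq> z"
proof -
  let ?h = "z \<sqinter> (d \<squnion> z)"
  have "z \<squnion> d = z"
    using join_eq_left[OF x(1)] x(2) unfolding qle_def by (metis join_assoc)
  have "?h \<squnion> (x \<sqinter> y) = z"
    using bound_meet_join_join[OF x] bound_meet_join_join[OF y] by (simp add: join_meet_distrib)
  then have "x \<sqinter> y \<squnion> ?h = z"
    using x(1) by (simp add: join_commute_bounded[of _ z] M.coboundedI1)
  moreover have "?h \<squnion> d = d \<squnion> z"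
    using join_commute_bounded[of ?h "d \<squnion> z" d] by (simp add: le_join join_meet_join)
  ultimately have "x \<sqinter> y \<squnion> d \<squnion> z = z"
    using \<open>z \<squnion> d = z\<close> by (metis join_assoc)
  then show ?thesis
    using le_join[of "x \<sqinter> y \<squnion> d" z] by simp
qed

lemma qle_meet_bounded:
  assumes x: "x \<preceq> z" "d \<lesssim> x" and y: "y \<preceq> z" "d \<lesssim> y"
  shows "d \<lesssim> x \<sqinter> y"
proof -
  let ?v = "x \<sqinter> y \<squnion> d"
  have v: "?v \<preceq> z"
    using meet_join_le_bound[OF x y] .
  have "x \<squnion> ?v = x" and "y \<squnion> ?v = y"
    using x(2) y(2) by (simp_all add: qle_def join_assoc[symmetric] join_eq_left)
  then have "?v \<preceq> x" and "?v \<preceq> y"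
    using le_if_qle_bounded[OF v x(1)] le_if_qle_bounded[OF v y(1)] by (simp_all add: qle_def)
  then have "?v = x \<sqinter> y"
    by (simp add: M.antisym le_join)
  then show ?thesis
    by (simp add: qle_def)
qed

lemma join_curlyvee: "a \<squnion> (a \<curlyvee> b) = a \<squnion> b"
  unfolding curlyvee_def join_meet_distrib join_join_self
  using qle_join_left[of a b] by (simp add: qle_def join_assoc[symmetric])

lemma curlyvee_join_left: "(a \<squnion> b) \<curlyvee> b = a \<curlyvee> b"
  unfolding curlyvee_def using qle_join_left[of b a]
  by (simp add: qle_def join_assoc join_idem)

lemma curlyvee_join_self: "(a \<squnion> b) \<curlyvee> a = a \<squnion> b"
  unfolding curlyvee_def using qle_join_left[of a b]
  by (simp add: qle_def join_join_self)


lemma qideal_principal: "qideal j {x. x \<lesssim> c}"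
  by (rule qidealI) (auto intro: qle_refl qle_trans join_qle)

lemma qideal_adjoin:
  assumes "qideal j I"
  shows "qideal j {z. \<exists>i\<in>I. z \<lesssim> i \<squnion> x}" (is "qideal j ?J")
proof (rule qidealI)
  show "?J \<noteq> {}"
    using qideal_nonempty[OF assms] qle_join_right by blast
  show "z \<in> ?J" if "z' \<in> ?J" and "z \<lesssim> z'" for z z'
    using that qle_trans by blast
  show "u \<squnion> v \<in> ?J" if u: "u \<in> ?J" and v: "v \<in> ?J" for u v
  proof -
    from u v obtain i i' where "i \<in> I" "u \<lesssim> i \<squnion> x" "i' \<in> I" "v \<lesssim> i' \<squnion> x"
      by blast
    moreover have "i \<squnion> x \<lesssim> i \<squnion> i' \<squnion> x" and "i' \<squnion> x \<lesssim> i \<squnion> i' \<squnion> x"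
      by (simp_all add: join_qle_mono_left qle_join_left qle_join_right)
    ultimately show ?thesis
      using qideal_join[OF assms] by (blast intro: join_qle qle_trans)
  qed
qed

lemma qle_if_rel_max_qideals_contain:
  assumes "\<And>I. rel_max_qideal j I \<Longrightarrow> c \<in> I \<Longrightarrow> x \<in> I"
  shows "x \<lesssim> c"
proof (rule ccontr)
  assume "\<not> x \<lesssim> c"
  then obtain I where "rel_max_qideal j I" "{y. y \<lesssim> c} \<subseteq> I" "x \<notin> I"
    using qideal_extends_to_rel_max[OF qideal_principal, of x c] by auto
  with assms show False
    using qle_refl by blast
qed

lemma refl_eps_rel: "(a, a) \<in> eps_rel j m I"
  unfolding eps_rel_def E_rel_def by (simp add: curlyvee_idem)

lemma eq_if_eps_rel_everywhere:
  assumes eps: "\<And>I. rel_max_qideal j I \<Longrightarrow> (a, b) \<in> eps_rel j m I"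
  shows "a = b"
proof -
  have eps_cases: "a \<in> I \<and> b \<in> I \<or> a \<notin> I \<and> b \<notin> I \<and> a \<curlyvee> b \<notin> I" if "rel_max_qideal j I" for I
    using eps[OF that] unfolding eps_rel_def E_rel_def by blast
  have "a \<lesssim> b" "b \<lesssim> a" "a \<lesssim> a \<curlyvee> b" "b \<lesssim> a \<curlyvee> b"
    by (blast intro: qle_if_rel_max_qideals_contain dest: eps_cases)+
  then have "a \<curlyvee> b = a \<sqinter> b"
    unfolding curlyvee_def by (simp add: qle_def)
  with \<open>a \<lesssim> a \<curlyvee> b\<close> \<open>b \<lesssim> a \<curlyvee> b\<close> have "a \<sqinter> b = a" and "a \<sqinter> b = b"
    using eq_if_le_qle[OF M.cobounded1] eq_if_le_qle[OF M.cobounded2] by simp_all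
  then show ?thesis
    by simp
qed

end

locale ado_rel_max_qideal = ado_semilat +
  fixes I d
  assumes qideal_I: "qideal j I"
    and d_notin_I: "d \<notin> I"
    and d_in_larger: "\<And>J. qideal j J \<Longrightarrow> I \<subset> J \<Longrightarrow> d \<in> J"
begin

abbreviation E where "E \<equiv> E_rel j m I"
abbreviation eps where "eps \<equiv> eps_rel j m I"

lemma mem_E_iff: "(a, b) \<in> E \<longleftrightarrow> a \<notin> I \<and> b \<notin> I \<and> a \<curlyvee> b \<notin> I"
  unfolding E_rel_def by simp

lemma mem_eps_iff: "(a, b) \<in> eps \<longleftrightarrow> (a, b) \<in> E \<or> a \<in> I \<and> b \<in> I"
  unfolding eps_rel_def by simp

lemma notin_I_upward: "x \<notin> I \<Longrightarrow> x \<lesssim> y \<Longrightarrow> y \<notin> I"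
  using qideal_down[OF qideal_I] by blast

lemma notin_I_upward_le: "x \<notin> I \<Longrightarrow> x \<preceq> y \<Longrightarrow> y \<notin> I"
  using notin_I_upward qle_if_le by blast

lemma meet_in_I: "a \<in> I \<or> b \<in> I \<Longrightarrow> a \<sqinter> b \<in> I"
  using notin_I_upward_le[of "a \<sqinter> b"] M.cobounded1 M.cobounded2 by blast

text \<open>The ideal generated by \<open>I\<close> and \<open>x \<notin> I\<close> contains \<open>d\<close>; this characterises the complement of \<open>I\<close>.\<close>

lemma witness_if_notin_I:
  assumes "x \<notin> I" shows "\<exists>i\<in>I. d \<lesssim> i \<squnion> x"
proof -
  let ?J = "{z. \<exists>i\<in>I. z \<lesssim> i \<squnion> x}"
  have "I \<subseteq> ?J" and "x \<in> ?J"
    using qideal_nonempty[OF qideal_I] by (auto intro: qle_join_left qle_join_right)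
  with assms have "I \<subset> ?J"
    by blast
  then have "d \<in> ?J"
    by (rule d_in_larger[OF qideal_adjoin[OF qideal_I]])
  then show ?thesis
    by blast
qed

lemma notin_I_if_witness: "i \<in> I \<Longrightarrow> d \<lesssim> i \<squnion> x \<Longrightarrow> x \<notin> I"
  using qideal_join[OF qideal_I] notin_I_upward d_notin_I by blast

lemma common_witness:
  assumes "x \<notin> I" and "y \<notin> I"
  shows "\<exists>i\<in>I. d \<lesssim> i \<squnion> x \<and> d \<lesssim> i \<squnion> y"
proof -
  obtain i i' where "i \<in> I" "d \<lesssim> i \<squnion> x" "i' \<in> I" "d \<lesssim> i' \<squnion> y"
    using witness_if_notin_I assms by blast
  moreover have "i \<squnion> x \<lesssim> i \<squnion> i' \<squnion> x" and "i' \<squnion> y \<lesssim> i \<squnion> i' \<squnion> y"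
    by (simp_all add: join_qle_mono_left qle_join_left qle_join_right)
  ultimately show ?thesis
    using qideal_join[OF qideal_I] by (blast intro: qle_trans)
qed

lemma meet_notin_I_if_bounded:
  assumes "x \<notin> I" "y \<notin> I" and "x \<preceq> z" "y \<preceq> z"
  shows "x \<sqinter> y \<notin> I"
proof -
  obtain i where "i \<in> I" "d \<lesssim> i \<squnion> x" "d \<lesssim> i \<squnion> y"
    using common_witness assms(1,2) by blast
  moreover have "i \<squnion> x \<preceq> i \<squnion> z" "i \<squnion> y \<preceq> i \<squnion> z"
    using assms(3,4) by (simp_all add: join_mono_right)
  ultimately have "d \<lesssim> i \<squnion> (x \<sqinter> y)"
    using qle_meet_bounded by (simp add: join_meet_distrib)
  with \<open>i \<in> I\<close> show ?thesis
    by (rule notin_I_if_witness)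
qed

lemma meet_notin_I_if_E: "(a, b) \<in> E \<Longrightarrow> a \<sqinter> b \<notin> I"
proof -
  assume "(a, b) \<in> E"
  then have a: "a \<notin> I" and b: "b \<notin> I" and c: "a \<curlyvee> b \<notin> I"
    by (simp_all add: mem_E_iff)
  have "a \<sqinter> (a \<curlyvee> b) \<notin> I"
    using meet_notin_I_if_bounded[OF a c le_join curlyvee_le_join] .
  moreover have "b \<sqinter> (a \<curlyvee> b) \<notin> I"
    using meet_notin_I_if_bounded[OF b c le_join curlyvee_le_join_commuted] .
  ultimately have "a \<sqinter> (a \<curlyvee> b) \<sqinter> (b \<sqinter> (a \<curlyvee> b)) \<notin> I"
    by (rule meet_notin_I_if_bounded[where z = "a \<curlyvee> b"]) simp_all
  then show ?thesis
    by (rule notin_I_upward_le) (simp add: M.coboundedI1 M.coboundedI2)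
qed

lemma E_sym: "(a, b) \<in> E \<Longrightarrow> (b, a) \<in> E"
  by (simp add: mem_E_iff curlyvee_commute)

lemma E_trans:
  assumes ab: "(a, b) \<in> E" and bc: "(b, c) \<in> E"
  shows "(a, c) \<in> E"
proof -
  have "a \<sqinter> b \<sqinter> (b \<sqinter> c) \<notin> I"
    using meet_notin_I_if_E[OF ab] meet_notin_I_if_E[OF bc]
    by (rule meet_notin_I_if_bounded[where z = b]) simp_all
  then have "a \<sqinter> c \<notin> I"
    by (rule notin_I_upward_le) (simp add: M.coboundedI1 M.coboundedI2)
  then have "a \<curlyvee> c \<notin> I"
    using notin_I_upward_le meet_le_curlyvee by blast
  with ab bc show ?thesis
    by (simp add: mem_E_iff)
qed

lemma E_join: "a \<notin> I \<Longrightarrow> (a \<squnion> b, a) \<in> E"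
  using notin_I_upward[OF _ qle_join_left] by (simp add: mem_E_iff curlyvee_join_self)

lemma E_join_in_I:
  assumes a: "a \<in> I" and b: "b \<notin> I"
  shows "(a \<squnion> b, b) \<in> E"
proof -
  obtain i where i: "i \<in> I" "d \<lesssim> i \<squnion> b"
    using witness_if_notin_I[OF b] by blast
  have "i \<squnion> b \<lesssim> i \<squnion> (a \<squnion> b)"
    by (blast intro: join_qle qle_trans qle_join_left qle_join_right)
  also have "i \<squnion> (a \<squnion> b) = i \<squnion> a \<squnion> (a \<curlyvee> b)"
    by (simp add: join_assoc join_curlyvee)
  finally have "d \<lesssim> i \<squnion> a \<squnion> (a \<curlyvee> b)"
    using i(2) qle_trans by blast
  then have "a \<curlyvee> b \<notin> I"
    using notin_I_if_witness qideal_join[OF qideal_I i(1) a] by blast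
  with b show ?thesis
    using notin_I_upward[OF b qle_join_right] by (simp add: mem_E_iff curlyvee_join_left)
qed

lemma E_meet: "(a, b) \<in> E \<Longrightarrow> (a \<sqinter> b, a) \<in> E"
  using meet_notin_I_if_E by (simp add: mem_E_iff curlyvee_meet_self)

lemma meet_in_I_if_not_eps: "(a, b) \<notin> eps \<Longrightarrow> a \<sqinter> b \<in> I"
  using meet_in_I notin_I_upward_le[OF _ meet_le_curlyvee] by (auto simp: mem_eps_iff mem_E_iff)

lemma equiv_eps: "equiv UNIV eps"
proof (intro equivI refl_onI symI transI)
  show "(a, a) \<in> eps" for a
    by (rule refl_eps_rel)
  show "(b, a) \<in> eps" if "(a, b) \<in> eps" for a b
    using that E_sym by (auto simp: mem_eps_iff)
  show "(a, c) \<in> eps" if "(a, b) \<in> eps" and "(b, c) \<in> eps" for a b c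
    using that E_trans by (auto simp: mem_eps_iff mem_E_iff)
qed simp

lemma eps_join:
  assumes "(a, a') \<in> eps" and "(b, b') \<in> eps"
  shows "(a \<squnion> b, a' \<squnion> b') \<in> eps"
proof (cases "a \<in> I")
  case False
  with assms(1) have "(a, a') \<in> E" and "a' \<notin> I"
    by (auto simp: mem_eps_iff mem_E_iff)
  with False show ?thesis
    using E_join[of a b] E_join[of a' b'] by (meson E_sym E_trans mem_eps_iff)
next
  case True
  with assms(1) have "a' \<in> I"
    by (auto simp: mem_eps_iff mem_E_iff)
  show ?thesis
  proof (cases "b \<in> I")
    case True
    with assms(2) have "b' \<in> I"
      by (auto simp: mem_eps_iff mem_E_iff)
    with \<open>a \<in> I\<close> \<open>a' \<in> I\<close> \<open>b \<in> I\<close> show ?thesis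
      by (simp add: mem_eps_iff qideal_join[OF qideal_I])
  next
    case False
    with assms(2) have "(b, b') \<in> E" and "b' \<notin> I"
      by (auto simp: mem_eps_iff mem_E_iff)
    with False show ?thesis
      using E_join_in_I[OF \<open>a \<in> I\<close> False] E_join_in_I[OF \<open>a' \<in> I\<close> \<open>b' \<notin> I\<close>]
      by (meson E_sym E_trans mem_eps_iff)
  qed
qed

lemma eps_meet:
  assumes "(a, a') \<in> eps" and "(b, b') \<in> eps"
  shows "(a \<sqinter> b, a' \<sqinter> b') \<in> eps"
proof (cases "a \<in> I \<or> b \<in> I")
  case True
  with assms have "a' \<in> I \<or> b' \<in> I"
    by (auto simp: mem_eps_iff mem_E_iff)
  with True show ?thesis
    by (simp add: mem_eps_iff meet_in_I)
next
  case False
  with assms have aa: "(a, a') \<in> E" and bb: "(b, b') \<in> E"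
    by (auto simp: mem_eps_iff)
  show ?thesis
  proof (cases "(a, b) \<in> E")
    case True
    then have "(a', b') \<in> E"
      using aa bb by (meson E_sym E_trans)
    with True aa show ?thesis
      using E_meet by (meson E_sym E_trans mem_eps_iff)
  next
    case False
    then have "(a', b') \<notin> E"
      using aa bb by (meson E_sym E_trans)
    with False aa bb have "a \<sqinter> b \<in> I" and "a' \<sqinter> b' \<in> I"
      by (auto simp: mem_eps_iff mem_E_iff intro!: meet_in_I_if_not_eps)
    then show ?thesis
      by (simp add: mem_eps_iff)
  qed
qed

lemma congruence_eps: "congruence2 j m eps"
  unfolding congruence2_def using equiv_eps eps_join eps_meet by blast

lemma flat_ado_quotient_eps: "flat_ado (UNIV // eps) (quot_op eps j) (quot_op eps m)"
proof -
  obtain z where z: "z \<in> I"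
    using qideal_nonempty[OF qideal_I] by blast
  have join_zero: "(z \<squnion> a, a) \<in> eps" for a
    using E_join_in_I[OF z] qideal_join[OF qideal_I z] by (cases "a \<in> I") (auto simp: mem_eps_iff)
  show ?thesis
  proof (rule flat_ado_quotient[OF congruence_eps])
    show "(a \<sqinter> a, a) \<in> eps" for a
      by (simp add: refl_eps_rel)
    show "(z \<sqinter> a, z) \<in> eps" "(a \<sqinter> z, z) \<in> eps" for a
      using z meet_in_I by (simp_all add: mem_eps_iff)
    show "(z \<squnion> a, a) \<in> eps" for a
      by (rule join_zero)
    show "(a \<sqinter> b, z) \<in> eps" if "(a, b) \<notin> eps" for a b
      using z meet_in_I_if_not_eps[OF that] by (simp add: mem_eps_iff)
    show "(a \<squnion> b, a) \<in> eps" if "(a, z) \<notin> eps" for a b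
      using z that E_join by (auto simp: mem_eps_iff)
  qed
qed

end

lemma rel_max_quotient_flat:
  assumes "ado_semilat j m" and "rel_max_qideal j I"
  shows "congruence2 j m (eps_rel j m I) \<and>
    flat_ado (UNIV // eps_rel j m I) (quot_op (eps_rel j m I) j) (quot_op (eps_rel j m I) m)"
proof -
  obtain d where "qideal j I" "d \<notin> I" "\<And>J. qideal j J \<Longrightarrow> I \<subset> J \<Longrightarrow> d \<in> J"
    using assms(2) unfolding rel_max_qideal_def by blast
  with assms(1) interpret ado_rel_max_qideal j m I d
    by (intro ado_rel_max_qideal.intro ado_rel_max_qideal_axioms.intro)
  show ?thesis
    using congruence_eps flat_ado_quotient_eps by blast
qed

lemma (in ado_semilat) subdirect_of_rel_max_quotients:
  "subdirect_of_quotients {I. rel_max_qideal j I} (eps_rel j m)"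
  unfolding subdirect_of_quotients_def
proof (rule injI)
  fix a b
  assume classes_eq: "restrict (\<lambda>I. eps_rel j m I `` {a}) {I. rel_max_qideal j I} =
    restrict (\<lambda>I. eps_rel j m I `` {b}) {I. rel_max_qideal j I}"
  have "eps_rel j m I `` {a} = eps_rel j m I `` {b}" if "rel_max_qideal j I" for I
    using fun_cong[OF classes_eq, of I] that by simp
  then show "a = b"
    using refl_eps_rel by (blast intro: eq_if_eps_rel_everywhere)
qed

theorem lemma4p9:
  fixes j m :: "'a \<Rightarrow> 'a \<Rightarrow> 'a"
  assumes "ado_semilattice j m"
  shows "(\<forall>I. rel_max_qideal j I \<longrightarrow>
            congruence2 j m (eps_rel j m I) \<and>
            flat_ado (UNIV // eps_rel j m I) (quot_op (eps_rel j m I) j) (quot_op (eps_rel j m I) m))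
         \<and> subdirect_of_quotients {I. rel_max_qideal j I} (eps_rel j m)"
proof -
  have "ado_semilat j m"
    using assms by (rule ado_semilatI)
  then show ?thesis
    using rel_max_quotient_flat ado_semilat.subdirect_of_rel_max_quotients by blast
qed

end
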